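(* Let $X\subset\mathbb{Z}^2$ be a simple closed $4$-curve with $4$ elements ($SC_4^{2,4}$, with the $4$-adjacency) and $Y\subset\mathbb{Z}^2$ a simple closed $8$-curve with $6$ elements ($SC_8^{2,6}$, with the $8$-adjacency). Then for no $k\in\{8,32,64,80\}$ (i.e. $k=k(t,4)$, $t\in\{1,2,3,4\}$) is the $k$-adjacency of $\mathbb{Z}^4$ on $X\times Y$ normal with respect to the given adjacencies of $X$ and $Y$.
   Context: For $t\in[1,n]$, distinct $p,q\in\mathbb{Z}^n$ are $k(t,n)$-adjacent if $|p_i-q_i|\le1$ for all $i$ and $p_i\ne q_i$ for at most $t$ indices; $k(t,n)=\sum_{i=1}^t 2^i\binom{n}{i}$ (so $4=k(1,2)$, $8=k(2,2)$; $k(1,4)=8,k(2,4)=32,k(3,4)=64,k(4,4)=80$). A simple closed $k$-curve with $l\ge4$ elements in $\mathbb{Z}^n$, denoted $SC_k^{n,l}$, is a set $\{y_0,\dots,y_{l-1}\}$ of $l$ distinct points such that $y_i,y_j$ are $k$-adjacent iff $i-j\equiv\pm1\pmod l$. For $X\subset\mathbb{Z}^{n_1}$ with $k_1$-adjacency and $Y\subset\mathbb{Z}^{n_2}$ with $k_2$-adjacency, a $k$-adjacency of $\mathbb{Z}^{n_1+n_2}$ is normal on $X\times Y$ if for all distinct $(x,y),(x',y')\in X\times Y$: they are $k$-adjacent iff ($x=x'$ and $y,y'$ $k_2$-adjacent) or ($y=y'$ and $x,x'$ $k_1$-adjacent) or ($x,x'$ $k_1$-adjacent and $y,y'$ $k_2$-adjacent).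 *)

theory Defs
  imports Main
begin

text \<open>Points of Z^n are represented as integer lists of length n.
  The product point (x,y) in Z^(n1+n2) is the concatenation x @ y.\<close>

definition kval :: "nat \<Rightarrow> nat \<Rightarrow> nat" where
  "kval t n = (\<Sum>i=1..t. 2 ^ i * (n choose i))"

definition tadj :: "nat \<Rightarrow> nat \<Rightarrow> int list \<Rightarrow> int list \<Rightarrow> bool" where
  "tadj t n p q \<longleftrightarrow> length p = n \<and> length q = n \<and> p \<noteq> q \<and>
     (\<forall>i<n. \<bar>p ! i - q ! i\<bar> \<le> 1) \<and> card {i. i < n \<and> p ! i \<noteq> q ! i} \<le> t"

definition kadj :: "nat \<Rightarrow> nat \<Rightarrow> int list \<Rightarrow> int list \<Rightarrow> bool" where
  "kadj n k p q \<longleftrightarrow> (\<exists>t\<in>{1..n}. kval t n = k \<and> tadj t n p q)"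

definition sc_curve :: "nat \<Rightarrow> nat \<Rightarrow> nat \<Rightarrow> int list set \<Rightarrow> bool" where
  "sc_curve n k l S \<longleftrightarrow> 4 \<le> l \<and> (\<exists>y :: nat \<Rightarrow> int list.
      S = y ` {..<l} \<and> inj_on y {..<l} \<and> (\<forall>i<l. length (y i) = n) \<and>
      (\<forall>i<l. \<forall>j<l. kadj n k (y i) (y j) \<longleftrightarrow> ((i + 1) mod l = j \<or> (j + 1) mod l = i)))"

definition normal_adj :: "nat \<Rightarrow> nat \<Rightarrow> int list set \<Rightarrow> nat \<Rightarrow> nat \<Rightarrow> int list set \<Rightarrow> nat \<Rightarrow> bool" where
  "normal_adj n1 k1 X n2 k2 Y k \<longleftrightarrow>
    (\<forall>x\<in>X. \<forall>y\<in>Y. \<forall>x'\<in>X. \<forall>y'\<in>Y. (x, y) \<noteq> (x', y') \<longrightarrow>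
       (kadj (n1 + n2) k (x @ y) (x' @ y') \<longleftrightarrow>
          (x = x' \<and> kadj n2 k2 y y') \<or> (y = y' \<and> kadj n1 k1 x x') \<or>
          (kadj n1 k1 x x' \<and> kadj n2 k2 y y')))"

end

theory Submission imports Defs begin

text \<open>For t = 1 the points (x0,y0) and (x1,y1), built from a 4-adjacent pair of X and an
  8-adjacent pair of Y, must be adjacent by normality, but they differ in at least two
  coordinates. For t \<ge> 2, two opposite corners x0, x2 of the 4-curve X are not 4-adjacent,
  yet they differ by exactly 1 in both coordinates, so (x0,y) and (x2,y) are t-adjacent in Z^4,
  although normality forbids it.\<close>

lemma kval_Suc: "kval (Suc t) n = kval t n + 2 ^ Suc t * (n choose Suc t)"
  by (simp add: kval_def)

lemma kval_strict_mono:
  assumes "t < t'" and "t' \<le> n"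
  shows "kval t n < kval t' n"
  using assms
proof (induction t' rule: less_induct)
  case (less t')
  then obtain s where t': "t' = Suc s" and "t \<le> s"
    by (metis Suc_le_eq less_imp_Suc_add add_Suc_right le_add1)
  have "0 < 2 ^ Suc s * (n choose Suc s)"
    using less.prems(2) t' by simp
  moreover have "kval t n \<le> kval s n"
    using less.IH[of s] less.prems t' \<open>t \<le> s\<close> by (cases "t = s") auto
  ultimately show ?case
    unfolding t' kval_Suc by linarith
qed

lemma kadj_kval_iff:
  assumes "1 \<le> t" and "t \<le> n"
  shows "kadj n (kval t n) p q \<longleftrightarrow> tadj t n p q"
proof -
  have "kval s n = kval t n \<longleftrightarrow> s = t" if "s \<le> n" for s
    using kval_strict_mono[of s t n] kval_strict_mono[of t s n] assms that
    by (cases s t rule: linorder_cases) auto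
  then show ?thesis
    using assms by (auto simp: kadj_def)
qed

lemma kval_1_2: "kval 1 2 = 4"
  by (simp add: kval_def)

lemma kval_4_image: "(\<lambda>t. kval t 4) ` {1..4} = {8, 32, 64, 80}"
proof -
  have "{1..4::nat} = {1, 2, 3, 4}"
    by auto
  then show ?thesis
    by (simp add: kval_def numeral_eq_Suc)
qed

definition ndiff :: "int list \<Rightarrow> int list \<Rightarrow> nat" where
  "ndiff p q = length (filter (\<lambda>(a, b). a \<noteq> b) (zip p q))"

lemma ndiff_eq_card:
  "length p = length q \<Longrightarrow> ndiff p q = card {i. i < length p \<and> p ! i \<noteq> q ! i}"
  by (simp add: ndiff_def length_filter_conv_card cong: conj_cong)

lemma tadj_iff_ndiff:
  "tadj t n p q \<longleftrightarrow> length p = n \<and> length q = n \<and> p \<noteq> q \<and>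
     list_all2 (\<lambda>a b. \<bar>a - b\<bar> \<le> 1) p q \<and> ndiff p q \<le> t"
proof (cases "length p = n \<and> length q = n")
  case True
  then show ?thesis
    by (simp add: tadj_def ndiff_eq_card list_all2_conv_all_nth)
qed (auto simp: tadj_def)

lemma ndiff_append:
  "length x = length x' \<Longrightarrow> ndiff (x @ y) (x' @ y') = ndiff x x' + ndiff y y'"
  by (simp add: ndiff_def)

lemma ndiff_self: "ndiff p p = 0"
  by (induction p) (simp_all add: ndiff_def)

lemma ndiff_pos: "length p = length q \<Longrightarrow> p \<noteq> q \<Longrightarrow> 0 < ndiff p q"
  by (induction p q rule: list_induct2) (auto simp: ndiff_def)

lemma tadj_mono: "tadj t n p q \<Longrightarrow> t \<le> t' \<Longrightarrow> tadj t' n p q"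
  by (simp add: tadj_def)

lemma tadj_append_same:
  "tadj t n1 x x' \<Longrightarrow> length y = n2 \<Longrightarrow> tadj t (n1 + n2) (x @ y) (x' @ y)"
  by (simp add: tadj_iff_ndiff ndiff_append ndiff_self list_all2_appendI list_all2_refl)

lemma tadj_append_two_le:
  assumes "tadj t (n1 + n2) (x @ y) (x' @ y')"
    and "length x = n1" and "length x' = n1" and "x \<noteq> x'" and "y \<noteq> y'"
  shows "2 \<le> t"
proof -
  have "length y = length y'"
    using assms(1-3) by (simp add: tadj_def)
  then have "2 \<le> ndiff (x @ y) (x' @ y')"
    using assms(2-5) ndiff_pos[of x x'] ndiff_pos[of y y'] by (simp add: ndiff_append)
  then show ?thesis
    using assms(1) tadj_iff_ndiff by fastforce
qed

lemma tadj1_2: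
  "tadj 1 2 [a, b] [c, d] \<longleftrightarrow> \<bar>a - c\<bar> + \<bar>b - d\<bar> = 1"
  by (auto simp: tadj_iff_ndiff ndiff_def)

lemma tadj2_2:
  "tadj 2 2 [a, b] [c, d] \<longleftrightarrow> [a, b] \<noteq> [c, d] \<and> \<bar>a - c\<bar> \<le> 1 \<and> \<bar>b - d\<bar> \<le> 1"
  by (auto simp: tadj_iff_ndiff ndiff_def)

lemma length2_cases:
  assumes "length p = 2"
  obtains a b where "p = [a, b]"
  using assms by (cases p; cases "tl p") auto

text \<open>Two points of Z^2 with two distinct common 4-neighbours are diagonal neighbours:
  at 4-distance 2 in a straight line they would have only the midpoint in common.\<close>
lemma common_4_neighbours_diagonal:
  assumes "tadj 1 2 p a" "tadj 1 2 a q" "tadj 1 2 p b" "tadj 1 2 b q"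
    and "a \<noteq> b" and "p \<noteq> q"
  shows "tadj 2 2 p q"
proof -
  have "length p = 2" "length q = 2" "length a = 2" "length b = 2"
    using assms(1,2,3) by (simp_all add: tadj_def)
  then obtain p0 p1 q0 q1 a0 a1 b0 b1
    where coords: "p = [p0, p1]" "q = [q0, q1]" "a = [a0, a1]" "b = [b0, b1]"
    by (metis length2_cases)
  have "a0 \<noteq> b0 \<or> a1 \<noteq> b1"
    using \<open>a \<noteq> b\<close> coords by simp
  then have "\<bar>p0 - q0\<bar> \<le> 1 \<and> \<bar>p1 - q1\<bar> \<le> 1"
    using assms(1-4) unfolding coords tadj1_2 by smt
  then show ?thesis
    using \<open>p \<noteq> q\<close> coords tadj2_2 by simp
qed

lemma kadj_lengths: "kadj n k p q \<Longrightarrow> length p = n \<and> length q = n"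
  by (auto simp: kadj_def tadj_def)

lemma kadj_neq: "kadj n k p q \<Longrightarrow> p \<noteq> q"
  by (auto simp: kadj_def tadj_def)

lemma sc_curve_adjacent_pair:
  assumes "sc_curve n k l S"
  obtains p q where "p \<in> S" "q \<in> S" "kadj n k p q"
proof -
  obtain y :: "nat \<Rightarrow> int list" where S: "S = y ` {..<l}" and "4 \<le> l"
    and adj: "\<forall>i<l. \<forall>j<l. kadj n k (y i) (y j) \<longleftrightarrow> ((i + 1) mod l = j \<or> (j + 1) mod l = i)"
    using assms unfolding sc_curve_def by blast
  have "kadj n k (y 0) (y 1)"
    using adj[rule_format, of 0 1] \<open>4 \<le> l\<close> by simp
  moreover have "y 0 \<in> S" "y 1 \<in> S"
    using S \<open>4 \<le> l\<close> by auto
  ultimately show ?thesis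
    using that by blast
qed

lemma sc_curve_4_opposite_corners:
  assumes "sc_curve n k 4 S"
  obtains p a q b where "p \<in> S" "a \<in> S" "q \<in> S" "b \<in> S" "p \<noteq> q" "a \<noteq> b" "\<not> kadj n k p q"
    "kadj n k p a" "kadj n k a q" "kadj n k p b" "kadj n k b q"
proof -
  obtain y :: "nat \<Rightarrow> int list" where S: "S = y ` {..<4}" and inj: "inj_on y {..<4}"
    and adj: "\<forall>i<4. \<forall>j<4. kadj n k (y i) (y j) \<longleftrightarrow> ((i + 1) mod 4 = j \<or> (j + 1) mod 4 = i)"
    using assms unfolding sc_curve_def by blast
  have "y 0 \<in> S" "y 1 \<in> S" "y 2 \<in> S" "y 3 \<in> S"
    using S by auto
  moreover have "y 0 \<noteq> y 2" "y 1 \<noteq> y 3"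
    using inj_onD[OF inj, of 0 2] inj_onD[OF inj, of 1 3] by auto
  moreover have "\<not> kadj n k (y 0) (y 2)" "kadj n k (y 0) (y 1)" "kadj n k (y 1) (y 2)"
    "kadj n k (y 0) (y 3)" "kadj n k (y 3) (y 2)"
    using adj[rule_format, of 0 2] adj[rule_format, of 0 1] adj[rule_format, of 1 2]
      adj[rule_format, of 0 3] adj[rule_format, of 3 2]
    by simp_all
  ultimately show ?thesis
    using that by blast
qed

lemma not_normal_adj_kval1:
  assumes "x \<in> X" "x' \<in> X" "kadj n1 k1 x x'" and "y \<in> Y" "y' \<in> Y" "kadj n2 k2 y y'"
  shows "\<not> normal_adj n1 k1 X n2 k2 Y (kval 1 (n1 + n2))"
proof
  assume "normal_adj n1 k1 X n2 k2 Y (kval 1 (n1 + n2))"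
  then have adj: "kadj (n1 + n2) (kval 1 (n1 + n2)) (x @ y) (x' @ y')"
    unfolding normal_adj_def using assms(1,2,4,5) kadj_neq[OF assms(3)] assms(3,6) by simp
  then have "1 \<le> n1 + n2"
    by (auto simp: kadj_def)
  with adj have "tadj 1 (n1 + n2) (x @ y) (x' @ y')"
    by (simp add: kadj_kval_iff)
  then show False
    using tadj_append_two_le kadj_lengths[OF assms(3)] kadj_neq[OF assms(3)] kadj_neq[OF assms(6)]
    by fastforce
qed

lemma not_normal_adj_diagonal:
  assumes "x \<in> X" "x' \<in> X" "x \<noteq> x'" "\<not> kadj n1 k1 x x'" "tadj 2 n1 x x'"
    and "y \<in> Y" "length y = n2" and "2 \<le> t" "t \<le> n1 + n2"
  shows "\<not> normal_adj n1 k1 X n2 k2 Y (kval t (n1 + n2))"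
proof
  assume "normal_adj n1 k1 X n2 k2 Y (kval t (n1 + n2))"
  then have "\<not> kadj (n1 + n2) (kval t (n1 + n2)) (x @ y) (x' @ y)"
    unfolding normal_adj_def using assms(1-4,6) by simp
  moreover have "tadj t (n1 + n2) (x @ y) (x' @ y)"
    using tadj_append_same[OF tadj_mono[OF assms(5,8)] assms(7)] .
  ultimately show False
    using kadj_kval_iff assms(8,9) by simp
qed

theorem mainTheorem7:
  fixes X Y :: "int list set"
  assumes "sc_curve 2 4 4 X"
    and "sc_curve 2 8 6 Y"
  shows "\<forall>k\<in>{8, 32, 64, 80}. \<not> normal_adj 2 4 X 2 8 Y k"
proof -
  have adj4: "kadj 2 4 p q \<longleftrightarrow> tadj 1 2 p q" for p q
    using kadj_kval_iff[of 1 2 p q] unfolding kval_1_2 by simp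
  obtain x a x' b where corners: "x \<in> X" "x' \<in> X" "x \<noteq> x'" "\<not> kadj 2 4 x x'"
    and "a \<in> X" "a \<noteq> b" "kadj 2 4 x a" "kadj 2 4 a x'" "kadj 2 4 x b" "kadj 2 4 b x'"
    using sc_curve_4_opposite_corners[OF assms(1)] by metis
  then have diagonal: "tadj 2 2 x x'"
    using common_4_neighbours_diagonal unfolding adj4 by blast
  obtain y y' where "y \<in> Y" "y' \<in> Y" "kadj 2 8 y y'"
    using sc_curve_adjacent_pair[OF assms(2)] .
  have "\<not> normal_adj 2 4 X 2 8 Y (kval t (2 + 2))" if "1 \<le> t" "t \<le> 4" for t
  proof (cases "t = 1")
    case True
    then show ?thesis
      using not_normal_adj_kval1 \<open>x \<in> X\<close> \<open>a \<in> X\<close> \<open>kadj 2 4 x a\<close>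
        \<open>y \<in> Y\<close> \<open>y' \<in> Y\<close> \<open>kadj 2 8 y y'\<close> by blast
  next
    case False
    then show ?thesis
      using not_normal_adj_diagonal[OF corners diagonal \<open>y \<in> Y\<close>] that
        kadj_lengths[OF \<open>kadj 2 8 y y'\<close>] by simp
  qed
  then show ?thesis
    unfolding kval_4_image[symmetric] by auto
qed

end
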